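(* Let $\mathcal G=(V,E,r)$ be a non-null graph. (1) An atom $a\in\mathbf A(\mathcal G)$ with $\operatorname{supp}(a)=(V',E',r')$ is prime if and only if $\deg_{\mathcal G}(v)\le 1$ for all $v\in V'$. (2) Let $a$ be an atom of $\mathbf A(\mathcal G)$ and $b\in\mathbf A(\mathcal G)$. If $a$ is a summand of $nb$ for some $n\ge1$, then $a$ is a summand of $b$. (3) Every atom of $\mathbf A(\mathcal G)$ is absolutely irreducible. (4) Let $\mathcal G_1,\dots,\mathcal G_s$ be pairwise disjoint, connected, non-null subgraphs of $\mathcal G$. Then the factorization of $a=\mathbf 1_{\mathcal G_1}+\dots+\mathbf 1_{\mathcal G_s}$ into atoms is unique up to order.
   Context: A graph $\mathcal G=(V,E,r)$ consists of a finite vertex set $V$, a finite edge set $E$ disjoint from $V$, and a map $r$ assigning to each edge a two-element subset of $V$; multiple edges allowed, no loops; non-null means $V\ne\emptyset$. $\deg_{\mathcal G}(v)$ is the number of edges incident with $v$. An agglomeration on $\mathcal G$ is a function $a\colon V\cup E\to\mathbb N_0$ with $a(v)\ge a(e)$ whenever $v$ is incident with $e$; $\mathbf A(\mathcal G)$ is the monoid of agglomerations under pointwise addition. $\operatorname{supp}(a)$ is the subgraph of vertices and edges where $a$ is positive; $\mathbf 1_{\mathcal G'}$ is the indicator of a subgraph. $a$ is a summand of $b$ if $b=a+c$ for some $c\in\mathbf A(\mathcal G)$. An atom is a nonzero element not a sum of two nonzero elements; an atom $p$ is prime if whenever $p$ is a summand of $b+c$ it is a summand of $b$ or of $c$; an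 atom $a$ is absolutely irreducible if for every $n\ge1$ the only factorization of $na$ into atoms is $a+\dots+a$. *)

theory Defs
  imports Main "HOL-Library.Multiset"
begin

text \<open>A graph (V,E,r): vertices and edges live in one ambient type 'a, V and E are
  finite and disjoint, r maps each edge to a two-element subset of V (multi-edges
  allowed, no loops).\<close>
definition graph :: "'a set \<Rightarrow> 'a set \<Rightarrow> ('a \<Rightarrow> 'a set) \<Rightarrow> bool" where
  "graph V E r \<longleftrightarrow> finite V \<and> finite E \<and> V \<inter> E = {} \<and>
     (\<forall>e\<in>E. r e \<subseteq> V \<and> card (r e) = 2)"

definition deg :: "'a set \<Rightarrow> ('a \<Rightarrow> 'a set) \<Rightarrow> 'a \<Rightarrow> nat" where
  "deg E r v = card {e\<in>E. v \<in> r e}"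

text \<open>Agglomerations: functions V \<union> E \<rightarrow> N0, represented as functions on 'a that
  vanish outside V \<union> E.\<close>
definition agg :: "'a set \<Rightarrow> 'a set \<Rightarrow> ('a \<Rightarrow> 'a set) \<Rightarrow> ('a \<Rightarrow> nat) \<Rightarrow> bool" where
  "agg V E r a \<longleftrightarrow> (\<forall>x. x \<notin> V \<union> E \<longrightarrow> a x = 0) \<and> (\<forall>e\<in>E. \<forall>v\<in>r e. a e \<le> a v)"

definition aplus :: "('a \<Rightarrow> nat) \<Rightarrow> ('a \<Rightarrow> nat) \<Rightarrow> 'a \<Rightarrow> nat" where
  "aplus a b = (\<lambda>x. a x + b x)"

definition azero :: "'a \<Rightarrow> nat" where
  "azero = (\<lambda>x. 0)"

definition asmult :: "nat \<Rightarrow> ('a \<Rightarrow> nat) \<Rightarrow> 'a \<Rightarrow> nat" where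
  "asmult n a = (\<lambda>x. n * a x)"

definition summand :: "'a set \<Rightarrow> 'a set \<Rightarrow> ('a \<Rightarrow> 'a set) \<Rightarrow> ('a \<Rightarrow> nat) \<Rightarrow> ('a \<Rightarrow> nat) \<Rightarrow> bool" where
  "summand V E r a b \<longleftrightarrow> (\<exists>c. agg V E r c \<and> b = aplus a c)"

definition atom :: "'a set \<Rightarrow> 'a set \<Rightarrow> ('a \<Rightarrow> 'a set) \<Rightarrow> ('a \<Rightarrow> nat) \<Rightarrow> bool" where
  "atom V E r a \<longleftrightarrow> agg V E r a \<and> a \<noteq> azero \<and>
     \<not> (\<exists>b c. agg V E r b \<and> agg V E r c \<and> b \<noteq> azero \<and> c \<noteq> azero \<and> a = aplus b c)"

definition prime_agg :: "'a set \<Rightarrow> 'a set \<Rightarrow> ('a \<Rightarrow> 'a set) \<Rightarrow> ('a \<Rightarrow> nat) \<Rightarrow> bool" where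
  "prime_agg V E r p \<longleftrightarrow> atom V E r p \<and>
     (\<forall>b c. agg V E r b \<longrightarrow> agg V E r c \<longrightarrow> summand V E r p (aplus b c) \<longrightarrow>
        summand V E r p b \<or> summand V E r p c)"

definition msum :: "('a \<Rightarrow> nat) multiset \<Rightarrow> 'a \<Rightarrow> nat" where
  "msum M = (\<lambda>x. \<Sum>\<^sub># (image_mset (\<lambda>f. f x) M))"

text \<open>A factorization of a into atoms, as a multiset of atoms (so order is irrelevant).\<close>
definition factorization :: "'a set \<Rightarrow> 'a set \<Rightarrow> ('a \<Rightarrow> 'a set) \<Rightarrow> ('a \<Rightarrow> nat) \<Rightarrow> ('a \<Rightarrow> nat) multiset \<Rightarrow> bool" where
  "factorization V E r a M \<longleftrightarrow> (\<forall>f\<in>#M. atom V E r f) \<and> a = msum M"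

definition abs_irred :: "'a set \<Rightarrow> 'a set \<Rightarrow> ('a \<Rightarrow> 'a set) \<Rightarrow> ('a \<Rightarrow> nat) \<Rightarrow> bool" where
  "abs_irred V E r a \<longleftrightarrow> atom V E r a \<and>
     (\<forall>n\<ge>1. \<forall>M. factorization V E r (asmult n a) M \<longrightarrow> M = replicate_mset n a)"

definition subgraph :: "'a set \<Rightarrow> 'a set \<Rightarrow> ('a \<Rightarrow> 'a set) \<Rightarrow> 'a set \<Rightarrow> 'a set \<Rightarrow> bool" where
  "subgraph V E r V' E' \<longleftrightarrow> V' \<subseteq> V \<and> E' \<subseteq> E \<and> (\<forall>e\<in>E'. r e \<subseteq> V')"

definition adj :: "'a set \<Rightarrow> ('a \<Rightarrow> 'a set) \<Rightarrow> ('a \<times> 'a) set" where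
  "adj E' r = {(u, w). \<exists>e\<in>E'. u \<in> r e \<and> w \<in> r e}"

definition connected_sub :: "'a set \<Rightarrow> ('a \<Rightarrow> 'a set) \<Rightarrow> 'a set \<Rightarrow> bool" where
  "connected_sub V' r E' \<longleftrightarrow> V' \<noteq> {} \<and> (\<forall>u\<in>V'. \<forall>w\<in>V'. (u, w) \<in> (adj E' r)\<^sup>*)"

definition ind :: "'a set \<Rightarrow> 'a set \<Rightarrow> 'a \<Rightarrow> nat" where
  "ind V' E' = (\<lambda>x. if x \<in> V' \<union> E' then 1 else 0)"

end

(*
  An atom takes only the values 0 and 1 (otherwise split off min a 1), so it is the
  indicator of its support; that support is connected, since the part reachable from
  one vertex would otherwise split off as a separate summand. Conversely the indicator of a connected
  subgraph is an atom, and the indicator of (V', E') is a summand of x exactly when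
  x >= 1 on V' and E' and x drops strictly along every edge outside E' at a vertex of V'.

  (1) If some vertex of the support has two edges, toggling each of them in the support
  gives two agglomerations, neither having the atom as a summand, whose sum does. If all
  degrees are at most 1, the support is a vertex or an edge, and the summand criterion
  reads 0 < phi x for an additive phi, which gives primality.
  (2) follows directly from the summand criterion.
  (3), (4) A summand of x is constant along every edge on which x is constant. Along a
  connected support this forces every atom in a factorization of n a to be a, and any
  two atoms in factorizations of a 0/1-valued agglomeration that meet to coincide.
*)
theory Submission
  imports Defs
begin

lemma graph_edge_endpoints:
  assumes "graph V E r" "e \<in> E"
  shows "r e \<subseteq> V" "r e \<noteq> {}"
  using assms unfolding graph_def by fastforce+

lemma graph_vertex_not_edge: "graph V E r \<Longrightarrow> v \<in> V \<Longrightarrow> v \<notin> E"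
  unfolding graph_def by blast

lemma agg_edge_le: "agg V E r a \<Longrightarrow> e \<in> E \<Longrightarrow> v \<in> r e \<Longrightarrow> a e \<le> a v"
  unfolding agg_def by blast

lemma agg_outside: "agg V E r a \<Longrightarrow> x \<notin> V \<union> E \<Longrightarrow> a x = 0"
  unfolding agg_def by blast

lemma agg_aplus: "agg V E r a \<Longrightarrow> agg V E r b \<Longrightarrow> agg V E r (aplus a b)"
  unfolding agg_def aplus_def by (auto intro: add_mono)

lemma agg_asmult: "agg V E r a \<Longrightarrow> agg V E r (asmult n a)"
  unfolding agg_def asmult_def by auto

lemma agg_ind: "graph V E r \<Longrightarrow> subgraph V E r V' E' \<Longrightarrow> agg V E r (ind V' E')"
  unfolding agg_def subgraph_def ind_def graph_def by auto

lemma summand_le: "summand V E r a x \<Longrightarrow> a y \<le> x y"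
  unfolding summand_def aplus_def by auto

text \<open>The difference "x - ind V' E'" can only fail to be an agglomeration
  along edges that leave V'.\<close>
lemma summand_ind_iff:
  assumes G: "graph V E r" and sg: "subgraph V E r V' E'" and x: "agg V E r x"
  shows "summand V E r (ind V' E') x \<longleftrightarrow>
    (\<forall>y\<in>V' \<union> E'. 1 \<le> x y) \<and> (\<forall>e\<in>E - E'. \<forall>v\<in>r e \<inter> V'. x e < x v)"
proof
  assume "summand V E r (ind V' E') x"
  then obtain c where c: "agg V E r c" and xc: "x = aplus (ind V' E') c"
    unfolding summand_def by blast
  have "x e < x v" if "e \<in> E - E'" "v \<in> r e \<inter> V'" for e v
  proof -
    have "e \<notin> V'" using that sg graph_vertex_not_edge[OF G] unfolding subgraph_def by blast
    then show ?thesis using that agg_edge_le[OF c, of e v] unfolding xc aplus_def ind_def by auto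
  qed
  then show "(\<forall>y\<in>V' \<union> E'. 1 \<le> x y) \<and> (\<forall>e\<in>E - E'. \<forall>v\<in>r e \<inter> V'. x e < x v)"
    unfolding xc aplus_def ind_def by auto
next
  assume H: "(\<forall>y\<in>V' \<union> E'. 1 \<le> x y) \<and> (\<forall>e\<in>E - E'. \<forall>v\<in>r e \<inter> V'. x e < x v)"
  define c where "c = (\<lambda>y. x y - ind V' E' y)"
  have "c e \<le> c v" if e: "e \<in> E" and v: "v \<in> r e" for e v
  proof -
    have "v \<in> V" using graph_edge_endpoints[OF G e] v by blast
    then have "e \<notin> V'" "v \<notin> E'" "e \<in> E' \<Longrightarrow> v \<in> V'"
      using e v sg graph_vertex_not_edge[OF G] unfolding subgraph_def by blast+
    moreover have "x e < x v" if "e \<notin> E'" "v \<in> V'" using H e v that by blast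
    ultimately show ?thesis using agg_edge_le[OF x e v] unfolding c_def ind_def by auto
  qed
  then have "agg V E r c" using agg_outside[OF x] unfolding agg_def c_def by auto
  moreover have "x = aplus (ind V' E') c"
    using H unfolding aplus_def c_def ind_def by (auto simp: fun_eq_iff)
  ultimately show "summand V E r (ind V' E') x" unfolding summand_def by blast
qed

lemma connected_subI:
  assumes v0: "v0 \<in> V'" and reach: "\<And>w. w \<in> V' \<Longrightarrow> (v0, w) \<in> (adj E' r)\<^sup>*"
  shows "connected_sub V' r E'"
  unfolding connected_sub_def
proof (intro conjI ballI)
  show "V' \<noteq> {}" using v0 by blast
  fix u w assume "u \<in> V'" "w \<in> V'"
  have "sym (adj E' r)" unfolding adj_def sym_def by blast
  then have "(u, v0) \<in> (adj E' r)\<^sup>*" using reach[OF \<open>u \<in> V'\<close>] by (metis sym_rtrancl symD)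
  then show "(u, w) \<in> (adj E' r)\<^sup>*" using reach[OF \<open>w \<in> V'\<close>] by (rule rtrancl_trans)
qed

lemma connected_sub_propagate:
  assumes cn: "connected_sub V' r E'" and u: "u \<in> V'" "P u" and w: "w \<in> V'"
    and step: "\<And>e y z. e \<in> E' \<Longrightarrow> y \<in> r e \<Longrightarrow> z \<in> r e \<Longrightarrow> P y \<Longrightarrow> P z"
  shows "P w"
proof -
  have "(u, w) \<in> (adj E' r)\<^sup>*" using cn u w unfolding connected_sub_def by blast
  then show ?thesis
    by (induction rule: rtrancl_induct) (use u step in \<open>auto simp: adj_def\<close>)
qed

lemma connected_sub_constant:
  assumes G: "graph V E r" and sg: "subgraph V E r V' E'" and cn: "connected_sub V' r E'"
    and edge: "\<And>e u. e \<in> E' \<Longrightarrow> u \<in> r e \<Longrightarrow> f e = f u"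
    and y: "y \<in> V' \<union> E'" and z: "z \<in> V' \<union> E'"
  shows "f y = f z"
proof -
  obtain v0 where v0: "v0 \<in> V'" using cn unfolding connected_sub_def by blast
  have on_V': "f u = f v0" if "u \<in> V'" for u
  proof (rule connected_sub_propagate[OF cn v0, where P = "\<lambda>u. f u = f v0"])
    fix e y z assume "e \<in> E'" "y \<in> r e" "z \<in> r e" "f y = f v0"
    then show "f z = f v0" using edge by metis
  qed (use that in simp_all)
  have "f w = f v0" if w: "w \<in> V' \<union> E'" for w
  proof (cases "w \<in> V'")
    case False
    then have "w \<in> E'" "r w \<subseteq> V'" using w sg unfolding subgraph_def by auto
    moreover obtain u where "u \<in> r w"
      using graph_edge_endpoints[OF G] sg \<open>w \<in> E'\<close> unfolding subgraph_def by blast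
    ultimately show ?thesis using edge on_V' by auto
  qed (use on_V' in blast)
  then show ?thesis using y z by simp
qed

text \<open>Along such an edge neither f nor the complementary summand can increase, so
  neither changes.\<close>
lemma summand_constant_on_connected:
  assumes G: "graph V E r" and sg: "subgraph V E r V' E'" and cn: "connected_sub V' r E'"
    and f: "agg V E r f" "summand V E r f x"
    and tight: "\<And>e u. e \<in> E' \<Longrightarrow> u \<in> r e \<Longrightarrow> x e = x u"
    and y: "y \<in> V' \<union> E'" and z: "z \<in> V' \<union> E'"
  shows "f y = f z"
proof (rule connected_sub_constant[OF G sg cn _ y z])
  fix e u assume e: "e \<in> E'" and u: "u \<in> r e"
  obtain c where c: "agg V E r c" and xc: "x = aplus f c" using f(2) unfolding summand_def by blast
  have "e \<in> E" using sg e unfolding subgraph_def by blast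
  then have "f e \<le> f u" "c e \<le> c u" using agg_edge_le[OF f(1) _ u] agg_edge_le[OF c _ u] by blast+
  moreover have "f e + c e = f u + c u" using tight[OF e u] unfolding xc aplus_def .
  ultimately show "f e = f u" by linarith
qed

lemma atom_pos: "atom V E r a \<Longrightarrow> \<exists>y. 0 < a y"
  unfolding atom_def azero_def by (auto simp: fun_eq_iff)

lemma atom_le_1:
  assumes "atom V E r a"
  shows "a x \<le> 1"
proof (rule ccontr)
  assume "\<not> a x \<le> 1"
  define b where "b = (\<lambda>y. min (a y) 1)"
  define c where "c = (\<lambda>y. a y - 1)"
  have a: "agg V E r a" using assms unfolding atom_def by blast
  have "agg V E r b" using a unfolding agg_def b_def by (auto simp: min_le_iff_disj)
  moreover have "agg V E r c" using a unfolding agg_def c_def by (auto intro: diff_le_mono)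
  moreover have "b x \<noteq> 0" "c x \<noteq> 0" using \<open>\<not> a x \<le> 1\<close> unfolding b_def c_def by auto
  then have "b \<noteq> azero" "c \<noteq> azero" unfolding azero_def by auto
  moreover have "a = aplus b c" unfolding aplus_def b_def c_def by (auto simp: min_def)
  ultimately show False using assms unfolding atom_def by blast
qed

lemma atom_eq_ind_support:
  assumes G: "graph V E r" and A: "atom V E r a"
  shows "a = ind {v\<in>V. 0 < a v} {e\<in>E. 0 < a e}"
    and "subgraph V E r {v\<in>V. 0 < a v} {e\<in>E. 0 < a e}"
proof -
  have a: "agg V E r a" using A unfolding atom_def by blast
  have "a x = ind {v\<in>V. 0 < a v} {e\<in>E. 0 < a e} x" for x
    using atom_le_1[OF A, of x] agg_outside[OF a, of x] unfolding ind_def by auto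
  then show "a = ind {v\<in>V. 0 < a v} {e\<in>E. 0 < a e}" ..
  show "subgraph V E r {v\<in>V. 0 < a v} {e\<in>E. 0 < a e}"
    unfolding subgraph_def using graph_edge_endpoints(1)[OF G] agg_edge_le[OF a]
    by (fastforce elim: order.strict_trans2)
qed

text \<open>Closedness makes ind V' E' the sum of the indicators of two subgraphs, one
  with vertex set C and one with vertex set V' - C.\<close>
lemma atom_ind_closed_subset:
  assumes G: "graph V E r" and sg: "subgraph V E r V' E'" and A: "atom V E r (ind V' E')"
    and C: "C \<subseteq> V'" and closed: "\<And>e. e \<in> E' \<Longrightarrow> r e \<inter> C \<noteq> {} \<Longrightarrow> r e \<subseteq> C"
  shows "C = {} \<or> C = V'"
proof -
  define E1 where "E1 = {e\<in>E'. r e \<inter> C \<noteq> {}}"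
  define E2 where "E2 = {e\<in>E'. r e \<inter> C = {}}"
  have "subgraph V E r C E1" "subgraph V E r (V' - C) E2"
    using sg C closed unfolding subgraph_def E1_def E2_def by auto
  then have aggs: "agg V E r (ind C E1)" "agg V E r (ind (V' - C) E2)"
    using agg_ind[OF G] by blast+
  have "V' \<inter> E' = {}" using sg graph_vertex_not_edge[OF G] unfolding subgraph_def by blast
  then have "ind V' E' = aplus (ind C E1) (ind (V' - C) E2)"
    using C unfolding ind_def aplus_def E1_def E2_def by (auto simp: fun_eq_iff)
  then have "ind C E1 = azero \<or> ind (V' - C) E2 = azero"
    using A aggs unfolding atom_def by blast
  moreover have "X = {}" if "ind X F = azero" for X F :: "'a set"
    using that unfolding ind_def azero_def fun_eq_iff by (metis UnI1 equals0I one_neq_zero)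
  ultimately show ?thesis using C by blast
qed

lemma atom_ind_connected:
  assumes G: "graph V E r" and sg: "subgraph V E r V' E'" and cn: "connected_sub V' r E'"
  shows "atom V E r (ind V' E')"
proof -
  obtain v0 where v0: "v0 \<in> V'" using cn unfolding connected_sub_def by blast
  have split: "b = azero \<or> c = azero"
    if b: "agg V E r b" and c: "agg V E r c" and bc: "ind V' E' = aplus b c" for b c
  proof -
    have tight: "ind V' E' e = ind V' E' u" if "e \<in> E'" "u \<in> r e" for e u
      using that sg unfolding subgraph_def ind_def by auto
    have "summand V E r b (ind V' E')" "summand V E r c (ind V' E')"
      using b c bc unfolding summand_def by (auto simp: aplus_def fun_eq_iff add.commute)
    then have const: "b y = b v0" "c y = c v0" if "y \<in> V' \<union> E'" for y
      using summand_constant_on_connected[OF G sg cn] b c tight that v0 by blast+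
    have outside: "b y = 0" "c y = 0" if "y \<notin> V' \<union> E'" for y
      using fun_cong[OF bc, of y] that unfolding ind_def aplus_def by simp_all
    have vanish: "f = azero" if "f v0 = 0" "\<And>y. y \<in> V' \<union> E' \<Longrightarrow> f y = f v0"
      "\<And>y. y \<notin> V' \<union> E' \<Longrightarrow> f y = 0" for f :: "'a \<Rightarrow> nat"
    proof
      fix y show "f y = azero y" using that by (cases "y \<in> V' \<union> E'") (auto simp: azero_def)
    qed
    have "b v0 + c v0 = 1" using fun_cong[OF bc, of v0] v0 unfolding ind_def aplus_def by simp
    then have "b v0 = 0 \<or> c v0 = 0" by arith
    then show ?thesis using vanish[of b] vanish[of c] const outside by blast
  qed
  have "ind V' E' \<noteq> azero" using v0 unfolding ind_def azero_def by (auto simp: fun_eq_iff)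
  then show ?thesis using split agg_ind[OF G sg] unfolding atom_def by blast
qed

lemma atom_iff_connected_ind:
  assumes G: "graph V E r"
  shows "atom V E r a \<longleftrightarrow>
    (\<exists>V' E'. subgraph V E r V' E' \<and> connected_sub V' r E' \<and> a = ind V' E')"
proof
  assume A: "atom V E r a"
  define V' where "V' = {v\<in>V. 0 < a v}"
  define E' where "E' = {e\<in>E. 0 < a e}"
  have a: "a = ind V' E'" and sg: "subgraph V E r V' E'"
    using atom_eq_ind_support[OF G A] unfolding V'_def E'_def by blast+
  obtain y where "y \<in> V' \<union> E'"
    using atom_pos[OF A] unfolding a ind_def by (auto split: if_splits)
  then obtain v0 where v0: "v0 \<in> V'"
    using sg graph_edge_endpoints(2)[OF G] unfolding subgraph_def by blast
  define C where "C = {w\<in>V'. (v0, w) \<in> (adj E' r)\<^sup>*}"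
  have "r e \<subseteq> C" if e: "e \<in> E'" and "r e \<inter> C \<noteq> {}" for e
  proof
    fix z assume z: "z \<in> r e"
    obtain u where "u \<in> r e" "(v0, u) \<in> (adj E' r)\<^sup>*" using \<open>r e \<inter> C \<noteq> {}\<close> C_def by blast
    moreover have "(u, z) \<in> adj E' r" using e z \<open>u \<in> r e\<close> unfolding adj_def by blast
    moreover have "z \<in> V'" using sg e z unfolding subgraph_def by blast
    ultimately show "z \<in> C" unfolding C_def by (auto intro: rtrancl_into_rtrancl)
  qed
  then have "C = V'"
    using atom_ind_closed_subset[OF G sg, of C] A v0 unfolding a C_def by blast
  then have "connected_sub V' r E'" using connected_subI[OF v0] unfolding C_def by blast
  then show "\<exists>V' E'. subgraph V E r V' E' \<and> connected_sub V' r E' \<and> a = ind V' E'"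
    using sg a by blast
next
  assume "\<exists>V' E'. subgraph V E r V' E' \<and> connected_sub V' r E' \<and> a = ind V' E'"
  then show "atom V E r a" using atom_ind_connected[OF G] by blast
qed

lemma deg_le_1_iff:
  assumes "finite E"
  shows "deg E r v \<le> 1 \<longleftrightarrow> (\<forall>e\<in>E. \<forall>e'\<in>E. v \<in> r e \<longrightarrow> v \<in> r e' \<longrightarrow> e = e')"
  using card_le_Suc0_iff_eq[of "{e\<in>E. v \<in> r e}"] assms unfolding deg_def by auto

definition toggle_edge :: "'a set \<Rightarrow> 'a set \<Rightarrow> ('a \<Rightarrow> 'a set) \<Rightarrow> 'a \<Rightarrow> 'a \<Rightarrow> nat" where
  "toggle_edge V' E' r e =
     (if e \<in> E' then ind V' (E' - {e}) else ind (V' \<union> r e) (insert e E'))"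

lemma toggle_edge_le_1: "toggle_edge V' E' r e y \<le> 1"
  unfolding toggle_edge_def ind_def by auto

lemma toggle_edge_eq_ind:
  assumes G: "graph V E r" and sg: "subgraph V E r V' E'" and e: "e \<in> E"
    and y: "y \<in> V' \<union> (E - {e})"
  shows "toggle_edge V' E' r e y = ind V' E' y"
  using y graph_edge_endpoints(1)[OF G e] graph_vertex_not_edge[OF G] sg
  unfolding toggle_edge_def ind_def subgraph_def by auto

lemma agg_toggle_edge:
  assumes G: "graph V E r" and sg: "subgraph V E r V' E'" and e: "e \<in> E"
  shows "agg V E r (toggle_edge V' E' r e)"
proof -
  have "subgraph V E r V' (E' - {e})" "subgraph V E r (V' \<union> r e) (insert e E')"
    using sg e graph_edge_endpoints(1)[OF G e] unfolding subgraph_def by auto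
  then show ?thesis unfolding toggle_edge_def using agg_ind[OF G] by simp
qed

lemma ind_not_summand_toggle_edge:
  assumes G: "graph V E r" and sg: "subgraph V E r V' E'" and e: "e \<in> E"
    and v: "v \<in> V'" "v \<in> r e"
  shows "\<not> summand V E r (ind V' E') (toggle_edge V' E' r e)"
proof -
  note iff = summand_ind_iff[OF G sg agg_toggle_edge[OF G sg e]]
  show ?thesis
  proof (cases "e \<in> E'")
    case True
    then have "\<not> 1 \<le> toggle_edge V' E' r e e"
      using graph_vertex_not_edge[OF G] sg e unfolding subgraph_def toggle_edge_def ind_def
      by auto
    then show ?thesis unfolding iff using True by blast
  next
    case False
    then have "\<not> toggle_edge V' E' r e e < toggle_edge V' E' r e v"
      using v unfolding toggle_edge_def ind_def by auto
    then show ?thesis unfolding iff using False e v by blast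
  qed
qed

lemma prime_ind_imp_deg_le_1:
  assumes G: "graph V E r" and sg: "subgraph V E r V' E'"
    and pr: "prime_agg V E r (ind V' E')" and v: "v \<in> V'"
  shows "deg E r v \<le> 1"
proof (rule ccontr)
  assume "\<not> deg E r v \<le> 1"
  then obtain e1 e2 where e: "e1 \<in> E" "e2 \<in> E" "v \<in> r e1" "v \<in> r e2" "e1 \<noteq> e2"
    using deg_le_1_iff[of E r v] G unfolding graph_def by blast
  define b where "b = toggle_edge V' E' r e1"
  define c where "c = toggle_edge V' E' r e2"
  have b: "agg V E r b" and c: "agg V E r c"
    unfolding b_def c_def using agg_toggle_edge[OF G sg] e by blast+
  have b_eq: "b y = ind V' E' y" if "y \<in> V' \<union> (E - {e1})" for y
    unfolding b_def using toggle_edge_eq_ind[OF G sg e(1) that] .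
  have c_eq: "c y = ind V' E' y" if "y \<in> V' \<union> (E - {e2})" for y
    unfolding c_def using toggle_edge_eq_ind[OF G sg e(2) that] .
  have E': "E' \<subseteq> E" and V': "V' \<inter> E = {}"
    using sg graph_vertex_not_edge[OF G] unfolding subgraph_def by blast+
  have "summand V E r (ind V' E') (aplus b c)"
    unfolding summand_ind_iff[OF G sg agg_aplus[OF b c]]
  proof (intro conjI ballI)
    fix y assume "y \<in> V' \<union> E'"
    then have "y \<in> V' \<union> (E - {e1}) \<or> y \<in> V' \<union> (E - {e2})" using E' e(5) by blast
    then have "b y = 1 \<or> c y = 1" using b_eq c_eq \<open>y \<in> V' \<union> E'\<close> unfolding ind_def by auto
    then show "1 \<le> aplus b c y" unfolding aplus_def by auto
  next
    fix f w assume f: "f \<in> E - E'" and w: "w \<in> r f \<inter> V'"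
    have "ind V' E' f = 0" using f V' unfolding ind_def by auto
    then have "b f = 0 \<or> c f = 0" using b_eq[of f] c_eq[of f] f e(5) by (cases "f = e1") auto
    moreover have "b f \<le> 1" "c f \<le> 1" unfolding b_def c_def by (rule toggle_edge_le_1)+
    ultimately have "b f + c f \<le> 1" by linarith
    moreover have "b w + c w = 2" using b_eq c_eq w unfolding ind_def by simp
    ultimately show "aplus b c f < aplus b c w" unfolding aplus_def by simp
  qed
  then show False
    using pr b c ind_not_summand_toggle_edge[OF G sg _ v] e unfolding prime_agg_def b_def c_def
    by blast
qed

lemma connected_sub_deg_le_1_cases:
  assumes G: "graph V E r" and sg: "subgraph V E r V' E'" and cn: "connected_sub V' r E'"
    and deg: "\<forall>v\<in>V'. deg E r v \<le> 1"
  obtains v where "V' = {v}" "E' = {}"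
  | e where "e \<in> E" "V' = r e" "E' = {e}"
proof (cases "E' = {}")
  case True
  obtain v where v: "v \<in> V'" using cn unfolding connected_sub_def by blast
  have "w = v" if "w \<in> V'" for w
    using connected_sub_propagate[OF cn v, of "\<lambda>w. w = v"] that True by blast
  then show ?thesis using that(1) v True by blast
next
  case False
  then obtain e where e: "e \<in> E'" by blast
  have eE: "e \<in> E" and re: "r e \<subseteq> V'" using sg e unfolding subgraph_def by auto
  have unique: "e' = e" if "e' \<in> E" "u \<in> r e" "u \<in> r e'" for e' u
    using deg re that eE deg_le_1_iff[of E r u] G unfolding graph_def by blast
  obtain u0 where u0: "u0 \<in> r e" using graph_edge_endpoints(2)[OF G eE] by blast
  have "w \<in> r e" if "w \<in> V'" for w
  proof (rule connected_sub_propagate[where P = "\<lambda>w. w \<in> r e", OF cn _ u0 that])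
    show "u0 \<in> V'" using u0 re by blast
    fix e' y z assume "e' \<in> E'" "y \<in> r e'" "z \<in> r e'" "y \<in> r e"
    then show "z \<in> r e" using unique sg unfolding subgraph_def by blast
  qed
  then have V': "V' = r e" using re by blast
  have "f = e" if "f \<in> E'" for f
  proof -
    have "f \<in> E" "r f \<subseteq> r e" using sg that V' unfolding subgraph_def by auto
    then show ?thesis using unique graph_edge_endpoints(2)[OF G \<open>f \<in> E\<close>] by blast
  qed
  then show ?thesis using that(2) eE V' e by blast
qed

lemma prime_aggI_additive:
  fixes \<phi> :: "('a \<Rightarrow> nat) \<Rightarrow> nat"
  assumes A: "atom V E r p"
    and test: "\<And>x. agg V E r x \<Longrightarrow> summand V E r p x \<longleftrightarrow> 0 < \<phi> x"
    and additive: "\<And>b c. agg V E r b \<Longrightarrow> agg V E r c \<Longrightarrow> \<phi> (aplus b c) = \<phi> b + \<phi> c"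
  shows "prime_agg V E r p"
  unfolding prime_agg_def
  using A test additive agg_aplus by (metis add_gr_0)

lemma prime_ind_if_deg_le_1:
  assumes G: "graph V E r" and sg: "subgraph V E r V' E'" and cn: "connected_sub V' r E'"
    and deg: "\<forall>v\<in>V'. deg E r v \<le> 1"
  shows "prime_agg V E r (ind V' E')"
proof -
  note A = atom_ind_connected[OF G sg cn]
  note iff = summand_ind_iff[OF G sg]
  have unique: "e = e'" if "v \<in> V'" "e \<in> E" "e' \<in> E" "v \<in> r e" "v \<in> r e'" for v e e'
    using deg that deg_le_1_iff[of E r v] G unfolding graph_def by blast
  show ?thesis
  proof (cases rule: connected_sub_deg_le_1_cases[OF G sg cn deg])
    case (1 v)
    show ?thesis
    proof (cases "\<exists>e\<in>E. v \<in> r e")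
      case True
      then obtain e0 where e0: "e0 \<in> E" "v \<in> r e0" by blast
      show ?thesis
      \<comment> \<open>the truncated subtraction is harmless: x e0 \<le> x v for every agglomeration x\<close>
      proof (rule prime_aggI_additive[OF A, where \<phi> = "\<lambda>x. x v - x e0"])
        show "summand V E r (ind V' E') x \<longleftrightarrow> 0 < x v - x e0" if "agg V E r x" for x
          unfolding iff[OF that] using 1 e0 unique[of v] by auto
        show "aplus b c v - aplus b c e0 = (b v - b e0) + (c v - c e0)"
          if "agg V E r b" "agg V E r c" for b c
          using agg_edge_le[OF that(1) e0] agg_edge_le[OF that(2) e0] unfolding aplus_def by simp
      qed
    next
      case False
      show ?thesis
      proof (rule prime_aggI_additive[OF A, where \<phi> = "\<lambda>x. x v"])
        show "summand V E r (ind V' E') x \<longleftrightarrow> 0 < x v" if "agg V E r x" for x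
          unfolding iff[OF that] using 1 False by auto
      qed (simp add: aplus_def)
    qed
  next
    case (2 e)
    show ?thesis
    proof (rule prime_aggI_additive[OF A, where \<phi> = "\<lambda>x. x e"])
      show "summand V E r (ind V' E') x \<longleftrightarrow> 0 < x e" if x: "agg V E r x" for x
      proof -
        have "0 < x y" if "0 < x e" "y \<in> r e" for y
          using agg_edge_le[OF x \<open>e \<in> E\<close> that(2)] that(1) by linarith
        then show ?thesis unfolding iff[OF x] using 2 unique by (auto simp: Suc_le_eq)
      qed
    qed (simp add: aplus_def)
  qed
qed

lemma prime_agg_iff_deg_le_1:
  assumes G: "graph V E r" and A: "atom V E r a"
  shows "prime_agg V E r a \<longleftrightarrow> (\<forall>v\<in>V. 0 < a v \<longrightarrow> deg E r v \<le> 1)"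
proof -
  obtain V' E' where sg: "subgraph V E r V' E'" and cn: "connected_sub V' r E'"
    and a: "a = ind V' E'"
    using A atom_iff_connected_ind[OF G] by blast
  have "v \<in> V \<and> 0 < a v \<longleftrightarrow> v \<in> V'" for v
    using sg graph_vertex_not_edge[OF G] unfolding a subgraph_def ind_def by auto
  then show ?thesis
    using prime_ind_imp_deg_le_1[OF G sg] prime_ind_if_deg_le_1[OF G sg cn] unfolding a
    by blast
qed

lemma summand_asmult_imp_summand:
  assumes G: "graph V E r" and A: "atom V E r a" and b: "agg V E r b"
    and s: "summand V E r a (asmult n b)"
  shows "summand V E r a b"
proof -
  obtain V' E' where sg: "subgraph V E r V' E'" and a: "a = ind V' E'"
    using A atom_iff_connected_ind[OF G] by blast
  have "n * b y < n * b v \<Longrightarrow> b y < b v" "1 \<le> n * b y \<Longrightarrow> 1 \<le> b y" for y v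
    by (auto simp: Suc_le_eq)
  then show ?thesis
    using s unfolding a summand_ind_iff[OF G sg b] summand_ind_iff[OF G sg agg_asmult[OF b]]
    unfolding asmult_def by blast
qed

lemma msum_add_mset: "msum (add_mset f M) = aplus f (msum M)"
  unfolding msum_def aplus_def by simp

lemma msum_replicate_mset: "msum (replicate_mset n a) = asmult n a"
  unfolding msum_def asmult_def by simp

lemma agg_msum: "\<forall>f\<in>#M. agg V E r f \<Longrightarrow> agg V E r (msum M)"
proof (induction M)
  case empty
  show ?case unfolding agg_def msum_def by simp
next
  case (add f M)
  then show ?case unfolding msum_add_mset by (simp add: agg_aplus)
qed

lemma summand_msum:
  assumes "\<forall>g\<in>#M. agg V E r g" and "f \<in># M"
  shows "summand V E r f (msum M)"
proof -
  obtain M' where "M = add_mset f M'" using assms(2) by (metis multi_member_split)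
  then show ?thesis
    using agg_msum[of M' V E r] assms(1) unfolding summand_def by (auto simp: msum_add_mset)
qed

lemma msum_pos_imp_member_pos: "0 < msum M x \<Longrightarrow> \<exists>f\<in>#M. 0 < f x"
  unfolding msum_def by (induction M) auto

lemma factorization_agg: "factorization V E r x M \<Longrightarrow> \<forall>f\<in>#M. agg V E r f"
  unfolding factorization_def atom_def by blast

text \<open>Every atom f in a factorization of n a is constant on the support of a, where
  n a is constant along every edge; being bounded by n a, f vanishes elsewhere.\<close>
lemma factorization_asmult_atom:
  assumes G: "graph V E r" and A: "atom V E r a" and M: "factorization V E r (asmult n a) M"
  shows "M = replicate_mset n a"
proof -
  obtain V' E' where sg: "subgraph V E r V' E'" and cn: "connected_sub V' r E'"
    and a: "a = ind V' E'"
    using A atom_iff_connected_ind[OF G] by blast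
  have x: "msum M = asmult n a" using M unfolding factorization_def by simp
  have "f = a" if f: "f \<in># M" for f
  proof -
    have fA: "atom V E r f" using M f unfolding factorization_def by blast
    then obtain W F where W: "subgraph V E r W F" "connected_sub W r F" "f = ind W F"
      using atom_iff_connected_ind[OF G] by blast
    then obtain w where w: "w \<in> W" "f w = 1" unfolding connected_sub_def ind_def by auto
    have fs: "summand V E r f (msum M)" using summand_msum[OF factorization_agg[OF M] f] .
    then have le: "f y \<le> n * a y" for y using summand_le x unfolding asmult_def by metis
    then have "w \<in> V' \<union> E'" using le[of w] w(2) unfolding a ind_def by (auto split: if_splits)
    have tight: "msum M e = msum M u" if "e \<in> E'" "u \<in> r e" for e u
      using that sg unfolding x a asmult_def subgraph_def ind_def by auto
    have "f y = 1" if "y \<in> V' \<union> E'" for y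
      using summand_constant_on_connected[OF G sg cn _ fs tight that \<open>w \<in> V' \<union> E'\<close>] fA w
      unfolding atom_def by simp
    moreover have "f y = 0" if "y \<notin> V' \<union> E'" for y
      using le[of y] that unfolding a ind_def by simp
    ultimately show "f = a" unfolding a ind_def by (auto simp: fun_eq_iff)
  qed
  then have M_rep: "M = replicate_mset (size M) a" by (blast intro: set_mset_subset_singletonD)
  have sizes: "asmult (size M) a = asmult n a" using x msum_replicate_mset M_rep by metis
  obtain v where "v \<in> V'" using cn unfolding connected_sub_def by blast
  then have "a v = 1" unfolding a ind_def by simp
  then have "size M = n" using fun_cong[OF sizes, of v] unfolding asmult_def by simp
  with M_rep show ?thesis by metis
qed

text \<open>x equals 1 on the support of f, hence is constant along its edges, and so g is
  constant, hence positive, on that support.\<close>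
lemma atom_summand_le_if_meet:
  assumes G: "graph V E r" and x: "\<And>y. x y \<le> 1"
    and f: "atom V E r f" "summand V E r f x" and g: "agg V E r g" "summand V E r g x"
    and v: "0 < f v" "0 < g v"
  shows "f y \<le> g y"
proof -
  obtain W F where sg: "subgraph V E r W F" and cn: "connected_sub W r F" and fW: "f = ind W F"
    using f(1) atom_iff_connected_ind[OF G] by blast
  have one: "x y = 1" if "y \<in> W \<union> F" for y
    using summand_le[OF f(2), of y] x[of y] that unfolding fW ind_def by simp
  have tight: "x e = x u" if "e \<in> F" "u \<in> r e" for e u
  proof -
    have "e \<in> W \<union> F" "u \<in> W \<union> F" using sg that unfolding subgraph_def by auto
    then show ?thesis using one by simp
  qed
  have "v \<in> W \<union> F" using v(1) unfolding fW ind_def by (auto split: if_splits)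
  then have "g y = g v" if "y \<in> W \<union> F" for y
    using summand_constant_on_connected[OF G sg cn g tight that] by blast
  then show ?thesis using v(2) unfolding fW ind_def by auto
qed

lemma atom_summands_eq_if_meet:
  assumes G: "graph V E r" and x: "\<And>y. x y \<le> 1"
    and f: "atom V E r f" "summand V E r f x" and g: "atom V E r g" "summand V E r g x"
    and v: "0 < f v" "0 < g v"
  shows "f = g"
proof
  have "agg V E r f" "agg V E r g" using f(1) g(1) unfolding atom_def by blast+
  then show "f y = g y" for y
    using atom_summand_le_if_meet[OF G x f _ g(2) v] atom_summand_le_if_meet[OF G x g _ f(2) v(2,1)]
    by (blast intro: le_antisym)
qed

lemma factorization_unique_if_le_1:
  assumes G: "graph V E r"
  shows "(\<And>y. x y \<le> 1) \<Longrightarrow> factorization V E r x M \<Longrightarrow> factorization V E r x N \<Longrightarrow> M = N"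
proof (induction M arbitrary: x N)
  case empty
  show ?case
  proof (rule ccontr)
    assume "{#} \<noteq> N"
    then obtain g where g: "g \<in># N" by (metis multiset_nonemptyE)
    then obtain y where "0 < g y"
      using empty(3) atom_pos unfolding factorization_def by blast
    moreover have "g y \<le> msum N y"
      using summand_le[OF summand_msum[OF factorization_agg[OF empty(3)] g]] .
    moreover have "msum N y = 0" using empty(2,3) unfolding factorization_def by (simp add: msum_def)
    ultimately show False by simp
  qed
next
  case (add f M)
  have xM: "x = msum (add_mset f M)" and xN: "x = msum N"
    using add.prems(2,3) unfolding factorization_def by simp_all
  have fA: "atom V E r f" using add.prems(2) unfolding factorization_def by simp
  have fs: "summand V E r f x"
    unfolding xM by (rule summand_msum[OF factorization_agg[OF add.prems(2)]]) simp
  obtain y where "0 < f y" using atom_pos[OF fA] by blast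
  then have "0 < msum N y" using order.strict_trans2[OF _ summand_le[OF fs]] xN by blast
  then obtain g where g: "g \<in># N" "0 < g y" by (blast dest: msum_pos_imp_member_pos)
  have gA: "atom V E r g" using add.prems(3) g(1) unfolding factorization_def by blast
  have gs: "summand V E r g x"
    unfolding xN by (rule summand_msum[OF factorization_agg[OF add.prems(3)] g(1)])
  have "f = g" using atom_summands_eq_if_meet[OF G add.prems(1) fA fs gA gs \<open>0 < f y\<close> g(2)] .
  then obtain N' where N': "N = add_mset f N'" using g(1) by (metis multi_member_split)
  have "msum M = msum N'"
    using xM xN unfolding N' msum_add_mset by (simp add: aplus_def fun_eq_iff)
  then have "factorization V E r (msum M) M" "factorization V E r (msum M) N'"
    using add.prems(2,3) unfolding N' factorization_def by auto
  moreover have "msum M z \<le> 1" for z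
    using add.prems(1)[of z] xM unfolding msum_add_mset aplus_def by simp
  ultimately have "M = N'" using add.IH by blast
  then show ?case using N' by simp
qed

lemma sum_ind_disjoint_le_1:
  fixes s :: nat
  assumes "\<forall>i<s. \<forall>j<s. i \<noteq> j \<longrightarrow> (Vs i \<union> Es i) \<inter> (Vs j \<union> Es j) = {}"
  shows "(\<Sum>i<s. ind (Vs i) (Es i) x) \<le> 1"
proof -
  have "(\<Sum>i<s. ind (Vs i) (Es i) x) = card {i\<in>{..<s}. x \<in> Vs i \<union> Es i}"
    unfolding ind_def card_eq_sum by (rule sum.inter_filter[symmetric]) simp
  also have "\<dots> \<le> 1" using assms by (auto simp: card_le_Suc0_iff_eq)
  finally show ?thesis .
qed

lemma ex1_factorization_sum_ind:
  fixes s :: nat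
  assumes G: "graph V E r"
    and sg: "\<forall>i<s. subgraph V E r (Vs i) (Es i) \<and> connected_sub (Vs i) r (Es i)"
    and disj: "\<forall>i<s. \<forall>j<s. i \<noteq> j \<longrightarrow> (Vs i \<union> Es i) \<inter> (Vs j \<union> Es j) = {}"
  shows "\<exists>!M. factorization V E r (\<lambda>x. \<Sum>i<s. ind (Vs i) (Es i) x) M"
proof (rule ex1I)
  let ?M = "image_mset (\<lambda>i. ind (Vs i) (Es i)) (mset_set {..<s})"
  have "\<forall>f\<in>#?M. atom V E r f" using sg atom_ind_connected[OF G] by simp
  moreover have "msum ?M = (\<lambda>x. \<Sum>i<s. ind (Vs i) (Es i) x)"
    unfolding msum_def by (simp add: sum_unfold_sum_mset multiset.map_comp comp_def)
  ultimately show "factorization V E r (\<lambda>x. \<Sum>i<s. ind (Vs i) (Es i) x) ?M"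
    unfolding factorization_def by simp
  then show "M = ?M" if "factorization V E r (\<lambda>x. \<Sum>i<s. ind (Vs i) (Es i) x) M" for M
    using factorization_unique_if_le_1[OF G _ that] sum_ind_disjoint_le_1[OF disj] by blast
qed

theorem lemma4p12:
  fixes V E :: "'a set" and r :: "'a \<Rightarrow> 'a set"
  assumes "graph V E r" and "V \<noteq> {}"
  shows "(\<forall>a. atom V E r a \<longrightarrow>
            (prime_agg V E r a \<longleftrightarrow> (\<forall>v\<in>V. a v > 0 \<longrightarrow> deg E r v \<le> 1)))
       \<and> (\<forall>a b n. atom V E r a \<longrightarrow> agg V E r b \<longrightarrow> n \<ge> 1 \<longrightarrow>
            summand V E r a (asmult n b) \<longrightarrow> summand V E r a b)
       \<and> (\<forall>a. atom V E r a \<longrightarrow> abs_irred V E r a)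
       \<and> (\<forall>(s::nat) Vs Es.
            (\<forall>i<s. subgraph V E r (Vs i) (Es i) \<and> connected_sub (Vs i) r (Es i)) \<longrightarrow>
            (\<forall>i<s. \<forall>j<s. i \<noteq> j \<longrightarrow> (Vs i \<union> Es i) \<inter> (Vs j \<union> Es j) = {}) \<longrightarrow>
            (\<exists>!M. factorization V E r (\<lambda>x. \<Sum>i<s. ind (Vs i) (Es i) x) M))"
  using prime_agg_iff_deg_le_1[OF assms(1)] summand_asmult_imp_summand[OF assms(1)]
    factorization_asmult_atom[OF assms(1)] ex1_factorization_sum_ind[OF assms(1)]
  unfolding abs_irred_def by blast

end
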